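(* Let $D$ be a strong nonseparable digraph and let $(D_0,D_1,\ldots,D_k)$ be an ear decomposition of $D$. Let $i\in\{0,\ldots,k-1\}$ and let $P_i=(x_0,x_1,\ldots,x_{r-1},x_r)$ be the ear of $D_i$ in $D$ (so $D_{i+1}=D_i\cup P_i$), with $l(P_i)\geq 2$. If $D_i$ has a kernel $N$ and one of the following holds: (1) $x_0,x_r\in N$ and $l(P_i)$ is even; (2) $x_0\in N$, $x_r\notin N$ and $l(P_i)$ is odd; (3) $x_0\notin N$ and $x_r\in N$; (4) $x_0,x_r\notin N$; then $D_{i+1}$ has a kernel.
   Context: All digraphs are finite, without loops or multiple arcs. Paths and cycles are directed; the length $l(P)$ of a path $P$ is its number of arcs. A digraph is strong if for every ordered pair of vertices $x,y$ there is a directed path from $x$ to $y$; it is nonseparable if its underlying undirected graph is nonseparable (has no cut vertex). For a subdigraph $H$ of $D$, an ear of $H$ in $D$ is a directed path $(x_0,\ldots,x_r)$ in $D$ whose end vertices lie in $H$ and whose internal vertices do not lie in $H$. An ear decomposition of a nonseparable strong digraph $D$ is a sequence $(D_0,\ldots,D_k)$ of nonseparable strong subdigraphs of $D$ such that $D_0$ is a directed cycle, $D_{j+1}=D_j\cup P_j$ with $P_j$ an ear of $D_j$ in $D$ for each $j\in\{0,\ldots,k-1\}$, and $D_k=D$. A kernel of a digraph is a set $N$ of vertices that is independent (no arc between two of its vertices) and absorbent (every vertex not in $N$ has an out-neighbour in $N$). *)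

theory Defs
  imports Main
begin

definition digraph :: "'a set \<Rightarrow> ('a \<times> 'a) set \<Rightarrow> bool" where
  "digraph V A \<longleftrightarrow> finite V \<and> A \<subseteq> V \<times> V \<and> (\<forall>x. (x, x) \<notin> A)"

definition subdigraph :: "'a set \<Rightarrow> ('a \<times> 'a) set \<Rightarrow> 'a set \<Rightarrow> ('a \<times> 'a) set \<Rightarrow> bool" where
  "subdigraph V' A' V A \<longleftrightarrow> digraph V' A' \<and> V' \<subseteq> V \<and> A' \<subseteq> A"

definition path_arcs :: "'a list \<Rightarrow> ('a \<times> 'a) set" where
  "path_arcs xs = set (zip xs (tl xs))"

definition dpath :: "('a \<times> 'a) set \<Rightarrow> 'a list \<Rightarrow> bool" where
  "dpath A xs \<longleftrightarrow> xs \<noteq> [] \<and> distinct xs \<and> path_arcs xs \<subseteq> A"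

definition plen :: "'a list \<Rightarrow> nat" where
  "plen xs = length xs - 1"

definition strong :: "'a set \<Rightarrow> ('a \<times> 'a) set \<Rightarrow> bool" where
  "strong V A \<longleftrightarrow> (\<forall>x\<in>V. \<forall>y\<in>V. \<exists>xs. dpath A xs \<and> hd xs = x \<and> last xs = y)"

definition und_connected_on :: "'a set \<Rightarrow> ('a \<times> 'a) set \<Rightarrow> bool" where
  "und_connected_on S A \<longleftrightarrow>
     (\<forall>x\<in>S. \<forall>y\<in>S. (x, y) \<in> ({(u, v). u \<in> S \<and> v \<in> S \<and> ((u, v) \<in> A \<or> (v, u) \<in> A)})\<^sup>*)"

definition nonseparable :: "'a set \<Rightarrow> ('a \<times> 'a) set \<Rightarrow> bool" where
  "nonseparable V A \<longleftrightarrow> und_connected_on V A \<and> (\<forall>v\<in>V. und_connected_on (V - {v}) A)"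

definition is_dcycle :: "'a set \<Rightarrow> ('a \<times> 'a) set \<Rightarrow> bool" where
  "is_dcycle V A \<longleftrightarrow> (\<exists>xs. length xs \<ge> 2 \<and> distinct xs \<and> set xs = V \<and>
      A = path_arcs xs \<union> {(last xs, hd xs)})"

definition is_ear :: "'a set \<Rightarrow> ('a \<times> 'a) set \<Rightarrow> 'a set \<Rightarrow> ('a \<times> 'a) set \<Rightarrow> 'a list \<Rightarrow> bool" where
  "is_ear VH AH V A xs \<longleftrightarrow> dpath A xs \<and> length xs \<ge> 2 \<and> hd xs \<in> VH \<and> last xs \<in> VH \<and>
      (\<forall>j. 0 < j \<and> j < length xs - 1 \<longrightarrow> xs ! j \<notin> VH)"

text \<open>Ear decomposition (D_0,...,D_k) of D=(V,A), with D_j = (Vs j, As j) and ears Ps j.\<close>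
definition ear_decomposition ::
  "'a set \<Rightarrow> ('a \<times> 'a) set \<Rightarrow> nat \<Rightarrow> (nat \<Rightarrow> 'a set) \<Rightarrow> (nat \<Rightarrow> ('a \<times> 'a) set) \<Rightarrow> (nat \<Rightarrow> 'a list) \<Rightarrow> bool" where
  "ear_decomposition V A k Vs As Ps \<longleftrightarrow>
     (\<forall>j\<le>k. subdigraph (Vs j) (As j) V A \<and> nonseparable (Vs j) (As j) \<and> strong (Vs j) (As j)) \<and>
     is_dcycle (Vs 0) (As 0) \<and>
     (\<forall>j<k. is_ear (Vs j) (As j) V A (Ps j) \<and>
            Vs (Suc j) = Vs j \<union> set (Ps j) \<and> As (Suc j) = As j \<union> path_arcs (Ps j)) \<and>
     Vs k = V \<and> As k = A"

definition kernel :: "'a set \<Rightarrow> ('a \<times> 'a) set \<Rightarrow> 'a set \<Rightarrow> bool" where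
  "kernel V A N \<longleftrightarrow> N \<subseteq> V \<and> (\<forall>x\<in>N. \<forall>y\<in>N. (x, y) \<notin> A) \<and>
     (\<forall>x\<in>V - N. \<exists>y\<in>N. (x, y) \<in> A)"

end

theory Submission
  imports Defs
begin

(* Extend the kernel N of H along an ear P = (x0, ..., xr) by those interior vertices xj whose
   distance r - j to the end of P has the parity that makes membership alternate along P and
   agree with "xr in N" at j = r. Then the interior is absorbed arc by arc towards xr, and the
   only arc of P that could join two kernel vertices is (x0, x1); the four cases of the theorem
   say precisely that x0 in N implies (xr in N iff r is even), which puts x1 outside. *)

lemma path_arcs_conv_nth: "path_arcs xs = {(xs!j, xs!Suc j) | j. Suc j < length xs}"
  unfolding path_arcs_def by (auto simp: in_set_zip nth_tl set_zip)

locale kernel_with_ear =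
  fixes VH :: "'a set" and AH :: "('a \<times> 'a) set" and N :: "'a set" and xs :: "'a list" and r :: nat
  assumes arcs_closed: "AH \<subseteq> VH \<times> VH"
    and kernel: "kernel VH AH N"
    and distinct: "distinct xs"
    and length_xs: "length xs = Suc r"
    and ends_in: "xs!0 \<in> VH" "xs!r \<in> VH"
    and interior_notin: "\<And>j. 0 < j \<Longrightarrow> j < r \<Longrightarrow> xs!j \<notin> VH"
begin

definition on_kernel_parity :: "nat \<Rightarrow> bool" where
  "on_kernel_parity j \<longleftrightarrow> (even (r - j) \<longleftrightarrow> xs!r \<in> N)"

definition ext_kernel :: "'a set" where
  "ext_kernel = N \<union> {xs!j | j. 0 < j \<and> j < r \<and> on_kernel_parity j}"

lemma on_kernel_parity_Suc: "j < r \<Longrightarrow> on_kernel_parity (Suc j) \<longleftrightarrow> \<not> on_kernel_parity j"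
proof -
  assume "j < r"
  then have "r - j = Suc (r - Suc j)" by arith
  then have "even (r - j) \<longleftrightarrow> odd (r - Suc j)" by simp
  then show ?thesis unfolding on_kernel_parity_def by blast
qed

lemma nth_eq_nth_iff: "i \<le> r \<Longrightarrow> j \<le> r \<Longrightarrow> xs!i = xs!j \<longleftrightarrow> i = j"
  using nth_eq_iff_index_eq[OF distinct] length_xs by simp

lemma nth_in_ext_kernel_iff:
  assumes "m \<le> r"
  shows "xs!m \<in> ext_kernel \<longleftrightarrow> (if m = 0 then xs!0 \<in> N else on_kernel_parity m)"
proof -
  have in_ear_part: "xs!m \<in> {xs!j | j. 0 < j \<and> j < r \<and> on_kernel_parity j} \<longleftrightarrow>
      0 < m \<and> m < r \<and> on_kernel_parity m"
  proof
    assume "xs!m \<in> {xs!j | j. 0 < j \<and> j < r \<and> on_kernel_parity j}"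
    then obtain j where "xs!m = xs!j" "0 < j" "j < r" "on_kernel_parity j" by blast
    then show "0 < m \<and> m < r \<and> on_kernel_parity m"
      using nth_eq_nth_iff[OF assms, of j] by simp
  qed blast
  consider "m = 0" | "0 < m" "m < r" | "m = r"
    using assms by linarith
  then show ?thesis
  proof cases
    case 2
    then have "xs!m \<notin> N"
      using interior_notin kernel unfolding kernel_def by blast
    with 2 in_ear_part show ?thesis
      unfolding ext_kernel_def by auto
  next
    case 3
    then show ?thesis
      using in_ear_part unfolding ext_kernel_def on_kernel_parity_def by auto
  qed (use in_ear_part ext_kernel_def in auto)
qed

lemma ext_kernel_independent:
  assumes "xs!0 \<in> N \<longrightarrow> on_kernel_parity 0"
    and "x \<in> ext_kernel" "y \<in> ext_kernel"
  shows "(x, y) \<notin> AH \<union> path_arcs xs"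
proof
  assume "(x, y) \<in> AH \<union> path_arcs xs"
  then consider "(x, y) \<in> AH" | j where "x = xs!j" "y = xs!Suc j" "j < r"
    unfolding path_arcs_conv_nth length_xs by blast
  then show False
  proof cases
    case 1
    have "ext_kernel \<inter> VH \<subseteq> N"
      using interior_notin unfolding ext_kernel_def by auto
    then have "x \<in> N" "y \<in> N"
      using 1 arcs_closed assms(2,3) by auto
    with 1 kernel show False
      unfolding kernel_def by blast
  next
    case (2 j)
    then have "on_kernel_parity (Suc j)" "if j = 0 then xs!0 \<in> N else on_kernel_parity j"
      using assms(2,3) nth_in_ext_kernel_iff by auto
    with 2 assms(1) on_kernel_parity_Suc show False
      by (auto split: if_splits)
  qed
qed

lemma ext_kernel_absorbent:
  assumes "x \<in> (VH \<union> set xs) - ext_kernel"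
  shows "\<exists>y\<in>ext_kernel. (x, y) \<in> AH \<union> path_arcs xs"
proof (cases "x \<in> VH")
  case True
  with assms kernel show ?thesis
    unfolding kernel_def ext_kernel_def by blast
next
  case False
  with assms obtain m where m: "m \<le> r" "x = xs!m"
    using length_xs by (auto simp: in_set_conv_nth less_Suc_eq_le)
  with False ends_in have "m \<noteq> 0" "m \<noteq> r"
    by metis+
  with m have "0 < m" "m < r"
    by auto
  with m assms have "on_kernel_parity (Suc m)"
    using nth_in_ext_kernel_iff on_kernel_parity_Suc by auto
  then have "xs!Suc m \<in> ext_kernel"
    using nth_in_ext_kernel_iff \<open>m < r\<close> by simp
  moreover have "(x, xs!Suc m) \<in> path_arcs xs"
    unfolding path_arcs_conv_nth using m \<open>m < r\<close> length_xs by auto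
  ultimately show ?thesis by blast
qed

lemma kernel_ext_kernel:
  assumes "xs!0 \<in> N \<longrightarrow> on_kernel_parity 0"
  shows "kernel (VH \<union> set xs) (AH \<union> path_arcs xs) ext_kernel"
proof -
  have "ext_kernel \<subseteq> VH \<union> set xs"
    using kernel length_xs unfolding kernel_def ext_kernel_def by auto
  then show ?thesis
    using ext_kernel_independent[OF assms] ext_kernel_absorbent
    unfolding kernel_def by blast
qed

end

lemma kernel_union_ear:
  assumes "AH \<subseteq> VH \<times> VH" and "kernel VH AH N" and "is_ear VH AH V A xs"
    and "hd xs \<in> N \<longrightarrow> (last xs \<in> N \<longleftrightarrow> even (plen xs))"
  shows "\<exists>N'. kernel (VH \<union> set xs) (AH \<union> path_arcs xs) N'"
proof -
  define r where "r = plen xs"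
  have length_xs: "length xs = Suc r"
    using assms(3) unfolding is_ear_def r_def plen_def by auto
  then have "xs \<noteq> []" by auto
  with length_xs have "hd xs = xs!0" "last xs = xs!r"
    by (simp_all add: hd_conv_nth last_conv_nth)
  then interpret kernel_with_ear VH AH N xs r
    using assms(1-3) length_xs unfolding is_ear_def dpath_def r_def plen_def
    by unfold_locales auto
  have "xs!0 \<in> N \<longrightarrow> on_kernel_parity 0"
    using assms(4) \<open>hd xs = xs!0\<close> \<open>last xs = xs!r\<close>
    unfolding on_kernel_parity_def r_def[symmetric] by simp
  then show ?thesis
    using kernel_ext_kernel by blast
qed

theorem mainTheorem11:
  fixes V :: "'a set" and A :: "('a \<times> 'a) set"
    and Vs :: "nat \<Rightarrow> 'a set" and As :: "nat \<Rightarrow> ('a \<times> 'a) set" and Ps :: "nat \<Rightarrow> 'a list"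
    and k i :: nat and N :: "'a set"
  assumes "digraph V A" and "strong V A" and "nonseparable V A"
    and "ear_decomposition V A k Vs As Ps"
    and "i < k"
    and "plen (Ps i) \<ge> 2"
    and "kernel (Vs i) (As i) N"
    and "(hd (Ps i) \<in> N \<and> last (Ps i) \<in> N \<and> even (plen (Ps i))) \<or>
         (hd (Ps i) \<in> N \<and> last (Ps i) \<notin> N \<and> odd (plen (Ps i))) \<or>
         (hd (Ps i) \<notin> N \<and> last (Ps i) \<in> N) \<or>
         (hd (Ps i) \<notin> N \<and> last (Ps i) \<notin> N)"
  shows "\<exists>N'. kernel (Vs (Suc i)) (As (Suc i)) N'"
proof -
  from assms(4,5) have "subdigraph (Vs i) (As i) V A" and ear: "is_ear (Vs i) (As i) V A (Ps i)"
    and "Vs (Suc i) = Vs i \<union> set (Ps i)" "As (Suc i) = As i \<union> path_arcs (Ps i)"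
    unfolding ear_decomposition_def by auto
  moreover have "As i \<subseteq> Vs i \<times> Vs i"
    using \<open>subdigraph (Vs i) (As i) V A\<close> unfolding subdigraph_def digraph_def by blast
  moreover have "hd (Ps i) \<in> N \<longrightarrow> (last (Ps i) \<in> N \<longleftrightarrow> even (plen (Ps i)))"
    using assms(8) by blast
  ultimately show ?thesis
    using kernel_union_ear[OF _ assms(7) ear] by simp
qed

end
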